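(* For any poset $P$ on $\{1,2,\ldots,n\}$, $$\sum_{f\in\mathcal{A}(P)}t^{\nu(f)}\mathbf{x}^f=\sum_{w\in\mathcal{L}(P)}\frac{t^{\mathrm{des}_P(w)}\prod_{i\in\mathrm{Des}(w)}\mathbf{x}^{w|_{[1,i]}}}{\prod_{i=1}^n\bigl(1-t^{c_P(w|_{[1,i]})}\mathbf{x}^{w|_{[1,i]}}\bigr)}.$$ Consequently: setting $t=1$, $\sum_{f\in\mathcal{A}(P)}\mathbf{x}^f=\sum_{w\in\mathcal{L}(P)}\frac{\prod_{i\in\mathrm{Des}(w)}\mathbf{x}^{w|_{[1,i]}}}{\prod_{i=1}^n(1-\mathbf{x}^{w|_{[1,i]}})}$; setting $x_i=q$ for all $i$, $\sum_{f\in\mathcal{A}(P)}t^{\nu(f)}q^{|f|}=\sum_{w\in\mathcal{L}(P)}\frac{t^{\mathrm{des}_P(w)}q^{\mathrm{maj}(w)}}{\prod_{i=1}^n(1-t^{c_P(w|_{[1,i]})}q^i)}$; further setting $q=1$, $\sum_{f\in\mathcal{A}(P)}t^{\nu(f)}=\sum_{w\in\mathcal{L}(P)}\frac{t^{\mathrm{des}_P(w)}}{\prod_{i=1}^n(1-t^{c_P(w|_{[1,i]})})}$; setting $t=1$ and $x_i=q$ for all $i$, $(1-q)(1-q^2)\cdots(1-q^n)\sum_{f\in\mathcal{A}(P)}q^{|f|}=\sum_{w\in\mathcal{L}(P)}q^{\mathrm{maj}(w)}$; and hence $\lim_{q\to1}(1-q)(1-q^2)\cdots(1-q^n)\sum_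{f\in\mathcal{A}(P)}q^{|f|}=|\mathcal{L}(P)|$.
   Context: All posets are finite, on the label set $\{1,\ldots,n\}$. A $P$-partition is a map $f:\{1,\ldots,n\}\to\mathbb{N}$ such that $i<_Pj$ implies $f(i)\ge f(j)$, with strict inequality $f(i)>f(j)$ whenever $i<_Pj$ and $i>j$ as integers; $\mathcal{A}(P)$ is the set of these. $\mathbf{x}^f=x_1^{f(1)}\cdots x_n^{f(n)}$, $|f|=\sum_if(i)$, and $\mathbf{x}^A=\prod_{i\in A}x_i$ for $A\subseteq\{1,\ldots,n\}$. For such $f$, $\nu(f)=\sum_{k\ge1}c_P(\{j:f(j)\ge k\})$, where for an order ideal $J$, $c_P(J)$ is the number of connected components of the Hasse diagram of $P$ restricted to $J$. $\mathcal{L}(P)$ is the set of linear extensions of $P$: permutations $w=(w(1),\ldots,w(n))$ with $w(i)<_Pw(j)\Rightarrow i<j$. $w|_{[1,i]}=\{w(1),\ldots,w(i)\}$. $\mathrm{Des}(w)=\{i\in\{1,\ldots,n-1\}:w(i)>w(i+1)\}$, $\mathrm{maj}(w)=\sum_{i\in\mathrm{Des}(w)}i$, and $\mathrm{des}_P(w)=\sum_{i\in\mathrm{Des}(w)}c_P(w|_{[1,i]})$. *)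

theory Defs
  imports "HOL-Analysis.Analysis"
begin

text \<open>A poset on the labels 1..n is a (reflexive) partial order P on {1..n}, given as a
relation set; i <_P j means (i,j) in P and i different from j.\<close>

definition PPartitions :: "(nat \<times> nat) set \<Rightarrow> nat \<Rightarrow> (nat \<Rightarrow> nat) set" where
  "PPartitions P n = {f. (\<forall>i. i \<notin> {1..n} \<longrightarrow> f i = 0) \<and>
      (\<forall>i j. (i, j) \<in> P \<and> i \<noteq> j \<longrightarrow> f j \<le> f i \<and> (j < i \<longrightarrow> f j < f i))}"

definition covers :: "(nat \<times> nat) set \<Rightarrow> nat \<Rightarrow> nat \<Rightarrow> bool" where
  "covers P i j \<longleftrightarrow> (i, j) \<in> P \<and> i \<noteq> j \<and>
      \<not> (\<exists>k. (i, k) \<in> P \<and> (k, j) \<in> P \<and> k \<noteq> i \<and> k \<noteq> j)"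

definition hasse_edges :: "(nat \<times> nat) set \<Rightarrow> nat set \<Rightarrow> (nat \<times> nat) set" where
  "hasse_edges P J = {(i, j). i \<in> J \<and> j \<in> J \<and> (covers P i j \<or> covers P j i)}"

definition cP :: "(nat \<times> nat) set \<Rightarrow> nat set \<Rightarrow> nat" where
  "cP P J = card (J // ((hasse_edges P J)\<^sup>*))"

definition fsize :: "nat \<Rightarrow> (nat \<Rightarrow> nat) \<Rightarrow> nat" where
  "fsize n f = (\<Sum>i\<in>{1..n}. f i)"

text \<open>nu(f) = sum over k >= 1 of c_P({j : f j >= k}); terms with k > |f| vanish.\<close>
definition nu :: "(nat \<times> nat) set \<Rightarrow> nat \<Rightarrow> (nat \<Rightarrow> nat) \<Rightarrow> nat" where
  "nu P n f = (\<Sum>k\<in>{1..fsize n f}. cP P {j \<in> {1..n}. k \<le> f j})"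

definition xpow :: "(nat \<Rightarrow> 'a::comm_ring_1) \<Rightarrow> nat \<Rightarrow> (nat \<Rightarrow> nat) \<Rightarrow> 'a" where
  "xpow x n f = (\<Prod>i\<in>{1..n}. x i ^ f i)"

definition xset :: "(nat \<Rightarrow> 'a::comm_ring_1) \<Rightarrow> nat set \<Rightarrow> 'a" where
  "xset x A = (\<Prod>i\<in>A. x i)"

text \<open>Linear extensions as lists w = [w(1),...,w(n)]; w(i) is w ! (i-1),
  and w restricted to [1,i] is set (take i w).\<close>
definition lin_ext :: "(nat \<times> nat) set \<Rightarrow> nat \<Rightarrow> nat list set" where
  "lin_ext P n = {w. distinct w \<and> set w = {1..n} \<and>
      (\<forall>a<n. \<forall>b<n. (w ! a, w ! b) \<in> P \<and> w ! a \<noteq> w ! b \<longrightarrow> a < b)}"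

definition Des :: "nat list \<Rightarrow> nat set" where
  "Des w = {i \<in> {1..length w - 1}. w ! i < w ! (i - 1)}"

definition maj :: "nat list \<Rightarrow> nat" where
  "maj w = (\<Sum>i\<in>Des w. i)"

definition desP :: "(nat \<times> nat) set \<Rightarrow> nat list \<Rightarrow> nat" where
  "desP P w = (\<Sum>i\<in>Des w. cP P (set (take i w)))"

end

theory Submission
  imports Defs
begin

text \<open>
  Every P-partition f arises in exactly one way as f = m(1)\<cdot>1[w|[1,1]] + ... + m(n)\<cdot>1[w|[1,n]],
  the sum of the indicator functions of the prefixes of a linear extension w with multiplicities
  m(i) \<ge> 1 at the descents of w: w lists the labels by decreasing f, ties broken by increasing
  label, and m(i) = f(w(i)) - f(w(i+1)). The strict inequalities demanded of f on inversions of
  the labelling are exactly the conditions m(i) \<ge> 1 at descents. Each level set {f \<ge> k} is then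
  a prefix w|[1,i], for exactly m(i) values of k, so the weight t^\<nu>(f) x^f is the product over i
  of (t^c_P(w|[1,i]) x^w|[1,i])^m(i), and summing over the independent m(i) is a product of
  geometric series. The remaining identities are specialisations; the limit holds because the
  q-series identity has a polynomial on its right-hand side.
\<close>

section \<open>Products of geometric series\<close>

lemma has_sum_geometric:
  fixes z :: "'a :: {real_normed_field, banach}"
  assumes "norm z < 1"
  shows "((\<lambda>k. z ^ k) has_sum (1 / (1 - z))) UNIV"
  using assms by (intro norm_summable_imp_has_sum geometric_sums)
    (auto simp: norm_power intro!: summable_geometric)

lemma has_sum_prod_PiE:
  fixes f :: "'a \<Rightarrow> 'b :: countable \<Rightarrow> 'c :: {real_normed_field, banach, second_countable_topology}"
  assumes "finite A" and "\<And>x. x \<in> A \<Longrightarrow> (\<lambda>y. norm (f x y)) summable_on B x"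
  shows "((\<lambda>g. \<Prod>x\<in>A. f x (g x)) has_sum (\<Prod>x\<in>A. \<Sum>\<^sub>\<infinity>y\<in>B x. f x y)) (PiE A B)"
proof -
  have "Infinite_Set_Sum.abs_summable_on (\<lambda>g. \<Prod>x\<in>A. f x (g x)) (PiE A B)"
    using assms(1) by (rule abs_summable_on_prod_PiE) (use assms(2) abs_summable_equivalent in auto)
  then have "(\<lambda>g. \<Prod>x\<in>A. f x (g x)) summable_on PiE A B"
    using abs_summable_equivalent abs_summable_summable by blast
  moreover have "(\<Sum>\<^sub>\<infinity>g\<in>PiE A B. \<Prod>x\<in>A. f x (g x)) = (\<Prod>x\<in>A. \<Sum>\<^sub>\<infinity>y\<in>B x. f x y)"
    using assms by (intro infsum_prod_PiE_abs) auto
  ultimately show ?thesis by (metis has_sum_infsum)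
qed

lemma has_sum_prod_geometric_PiE:
  fixes z :: "'a \<Rightarrow> 'c :: {real_normed_field, banach, second_countable_topology}"
  assumes "finite I" "D \<subseteq> I" "\<And>i. i \<in> I \<Longrightarrow> norm (z i) < 1"
  shows "((\<lambda>m. \<Prod>i\<in>I. z i ^ m i) has_sum ((\<Prod>i\<in>D. z i) / (\<Prod>i\<in>I. 1 - z i)))
           (PiE I (\<lambda>i. if i \<in> D then {1..} else UNIV))"
proof -
  define B :: "'a \<Rightarrow> nat set" where "B = (\<lambda>i. if i \<in> D then {1..} else UNIV)"
  have geom: "((\<lambda>k. z i ^ k) has_sum ((if i \<in> D then z i else 1) / (1 - z i))) (B i)"
    if "i \<in> I" for i
    using has_sum_geometric_from_1[OF assms(3)[OF that]] has_sum_geometric[OF assms(3)[OF that]]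
    by (simp add: B_def)
  have norm_geom: "(\<lambda>k. norm (z i ^ k)) summable_on B i" if "i \<in> I" for i
  proof -
    have "(\<lambda>k. norm (z i ^ k)) summable_on UNIV"
      using assms(3)[OF that]
      by (intro norm_summable_imp_summable_on) (auto simp: norm_power intro!: summable_geometric)
    then show ?thesis by (rule summable_on_subset_banach) simp
  qed
  have "((\<lambda>m. \<Prod>i\<in>I. z i ^ m i) has_sum (\<Prod>i\<in>I. \<Sum>\<^sub>\<infinity>k\<in>B i. z i ^ k)) (PiE I B)"
    using has_sum_prod_PiE[of I "\<lambda>i k. z i ^ k" B] assms(1) norm_geom by simp
  also have "(\<Prod>i\<in>I. \<Sum>\<^sub>\<infinity>k\<in>B i. z i ^ k) = (\<Prod>i\<in>I. (if i \<in> D then z i else 1) / (1 - z i))"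
    using geom by (intro prod.cong refl) (simp add: infsumI)
  also have "\<dots> = (\<Prod>i\<in>D. z i) / (\<Prod>i\<in>I. 1 - z i)"
    using assms(1,2) by (simp add: prod_dividef prod.If_cases Int_absorb1)
  finally show ?thesis unfolding B_def .
qed

lemma length_if_distinct_set_eq:
  "distinct w \<Longrightarrow> set w = {1..n} \<Longrightarrow> length w = n"
  using distinct_card by fastforce

lemma lin_extD:
  assumes "w \<in> lin_ext P n"
  shows "distinct w" "set w = {1..n}" "length w = n"
  using assms length_if_distinct_set_eq by (auto simp: lin_ext_def)

lemma finite_lin_ext: "finite (lin_ext P n)"
proof (rule finite_subset)
  show "lin_ext P n \<subseteq> {w. set w \<subseteq> {1..n} \<and> length w = n}"
    using lin_extD by blast
qed (rule finite_lists_length_eq, simp)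

lemma nth_in_set_take_iff:
  assumes "distinct w" "p < length w"
  shows "w ! p \<in> set (take i w) \<longleftrightarrow> p < i"
  using assms by (auto simp: in_set_conv_nth nth_eq_iff_index_eq)

lemma Des_subset: "Des w \<subseteq> {1..<length w}"
  unfolding Des_def by auto

lemma nth_le_Suc_if_not_Des:
  assumes "Suc q < length w" "Suc q \<notin> Des w"
  shows "w ! q \<le> w ! Suc q"
  using assms by (auto simp: Des_def)

section \<open>From a linear extension and multiplicities to a P-partition\<close>

definition tail_sum :: "nat \<Rightarrow> (nat \<Rightarrow> nat) \<Rightarrow> nat \<Rightarrow> nat" where
  "tail_sum n m p = (\<Sum>i\<in>{Suc p..n}. m i)"

definition prefix_comb :: "nat \<Rightarrow> nat list \<Rightarrow> (nat \<Rightarrow> nat) \<Rightarrow> nat \<Rightarrow> nat" where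
  "prefix_comb n w m a = (\<Sum>i\<in>{1..n}. if a \<in> set (take i w) then m i else 0)"

definition des_mults :: "nat \<Rightarrow> nat list \<Rightarrow> (nat \<Rightarrow> nat) set" where
  "des_mults n w = (\<Pi>\<^sub>E i\<in>{1..n}. if i \<in> Des w then {1..} else UNIV)"

lemma des_mults_pos:
  assumes "m \<in> des_mults n w" "length w = n" "i \<in> Des w"
  shows "0 < m i"
proof -
  have "i \<in> {1..n}" using assms(2,3) Des_subset[of w] by auto
  then have "m i \<in> (if i \<in> Des w then {1..} else UNIV)"
    using assms(1) PiE_mem unfolding des_mults_def by fast
  with assms(3) show ?thesis by simp
qed

lemma tail_sum_Suc: "p < n \<Longrightarrow> tail_sum n m p = m (Suc p) + tail_sum n m (Suc p)"
  unfolding tail_sum_def by (simp add: sum.atLeast_Suc_atMost)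

lemma tail_sum_antimono: "p \<le> q \<Longrightarrow> tail_sum n m q \<le> tail_sum n m p"
  unfolding tail_sum_def by (rule sum_mono2) auto

lemma prefix_comb_nth:
  assumes "distinct w" "length w = n" "p < n"
  shows "prefix_comb n w m (w ! p) = tail_sum n m p"
proof -
  have "prefix_comb n w m (w ! p) = (\<Sum>i\<in>{1..n}. if p < i then m i else 0)"
    unfolding prefix_comb_def using nth_in_set_take_iff[of w p] assms by simp
  also have "\<dots> = (\<Sum>i\<in>{i\<in>{1..n}. p < i}. m i)"
    by (rule sum.inter_filter[symmetric]) simp
  also have "{i\<in>{1..n}. p < i} = {Suc p..n}" by auto
  finally show ?thesis by (simp add: tail_sum_def)
qed

lemma prefix_comb_notin: "a \<notin> set w \<Longrightarrow> prefix_comb n w m a = 0"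
  unfolding prefix_comb_def by (auto intro!: sum.neutral dest: in_set_takeD)

text \<open>Between two positions either some multiplicity is positive, or there is no descent
  and the labels increase.\<close>
lemma tail_sum_less_or_nth_le:
  assumes "length w = n" "m \<in> des_mults n w" "p \<le> q" "q < n"
  shows "tail_sum n m q < tail_sum n m p \<or> w ! p \<le> w ! q"
  using assms(3,4)
proof (induction q rule: dec_induct)
  case (step k)
  show ?case
  proof (cases "m (Suc k) = 0")
    case True
    then have "Suc k \<notin> Des w" using des_mults_pos[OF assms(2,1)] by force
    then have "w ! k \<le> w ! Suc k"
      using step assms(1) by (intro nth_le_Suc_if_not_Des) auto
    then show ?thesis using step tail_sum_Suc[of k n m] True by auto
  next
    case False
    then show ?thesis
      using step tail_sum_Suc[of k n m] tail_sum_antimono[of p k n m] by auto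
  qed
qed simp

lemma prefix_comb_PPartitions:
  assumes po: "partial_order_on {1..n} P" and w: "w \<in> lin_ext P n" and m: "m \<in> des_mults n w"
  shows "prefix_comb n w m \<in> PPartitions P n"
proof -
  note wf = lin_extD[OF w]
  show ?thesis unfolding PPartitions_def
  proof (intro CollectI conjI allI impI)
    fix i assume "i \<notin> {1..n}"
    then show "prefix_comb n w m i = 0" using prefix_comb_notin wf by simp
  next
    fix i j assume ij: "(i, j) \<in> P \<and> i \<noteq> j"
    then have "i \<in> set w" "j \<in> set w"
      using partial_order_onD(4)[OF po] wf by auto
    then obtain p q where pq: "p < n" "q < n" "i = w ! p" "j = w ! q"
      using wf by (metis in_set_conv_nth)
    have "p < q" using w ij pq unfolding lin_ext_def by auto
    have fi: "prefix_comb n w m i = tail_sum n m p" and fj: "prefix_comb n w m j = tail_sum n m q"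
      using prefix_comb_nth wf pq by auto
    show "prefix_comb n w m j \<le> prefix_comb n w m i"
      using fi fj tail_sum_antimono \<open>p < q\<close> by simp
    assume "j < i"
    then show "prefix_comb n w m j < prefix_comb n w m i"
      using tail_sum_less_or_nth_le[of w n m p q] wf m pq \<open>p < q\<close> fi fj by auto
  qed
qed

section \<open>The inverse decomposition\<close>

text \<open>On the labels \<open>1..n\<close> this key orders by decreasing value of \<open>f\<close>, ties broken
  by increasing label.\<close>
definition label_key :: "nat \<Rightarrow> (nat \<Rightarrow> nat) \<Rightarrow> nat \<Rightarrow> int" where
  "label_key n f a = int a - int (f a) * int (Suc n)"

definition sorted_labels :: "nat \<Rightarrow> (nat \<Rightarrow> nat) \<Rightarrow> nat list" where
  "sorted_labels n f = sort_key (label_key n f) [1..<Suc n]"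

definition prefix_jumps :: "nat \<Rightarrow> nat list \<Rightarrow> (nat \<Rightarrow> nat) \<Rightarrow> nat \<Rightarrow> nat" where
  "prefix_jumps n w f = (\<lambda>i\<in>{1..n}. f (w ! (i - 1)) - (if i < n then f (w ! i) else 0))"

lemma label_key_le_iff:
  assumes "a \<in> {1..n}" "b \<in> {1..n}"
  shows "label_key n f a \<le> label_key n f b \<longleftrightarrow> f b < f a \<or> (f a = f b \<and> a \<le> b)"
proof -
  have less: "label_key n f a < label_key n f b" if "f b < f a" "a \<in> {1..n}" "b \<in> {1..n}" for a b
  proof -
    have "(int (f b) + 1) * int (Suc n) \<le> int (f a) * int (Suc n)"
      using that by (intro mult_right_mono) auto
    then show ?thesis using that unfolding label_key_def by (simp add: algebra_simps)
  qed
  show ?thesis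
  proof (cases "f a = f b")
    case False
    then have "f a < f b \<or> f b < f a" by arith
    then show ?thesis using less[of b a] less[of a b] assms by auto
  qed (simp add: label_key_def)
qed

lemma inj_on_label_key: "inj_on (label_key n f) {1..n}"
proof (rule inj_onI)
  fix a b assume "a \<in> {1..n}" "b \<in> {1..n}" "label_key n f a = label_key n f b"
  then show "a = b" using label_key_le_iff[of a n b f] label_key_le_iff[of b n a f] by auto
qed

lemma sorted_labels:
  "distinct (sorted_labels n f)" "set (sorted_labels n f) = {1..n}"
  "length (sorted_labels n f) = n" "sorted (map (label_key n f) (sorted_labels n f))"
  unfolding sorted_labels_def by auto

lemma sorted_labels_nth:
  fixes f :: "nat \<Rightarrow> nat"
  assumes "p \<le> q" "q < n"
  defines "w \<equiv> sorted_labels n f"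
  shows "f (w ! q) < f (w ! p) \<or> (f (w ! p) = f (w ! q) \<and> w ! p \<le> w ! q)"
proof -
  have mem: "w ! p \<in> {1..n}" "w ! q \<in> {1..n}"
    using assms sorted_labels[of n f] nth_mem by (metis le_less_trans)+
  have "label_key n f (w ! p) \<le> label_key n f (w ! q)"
    using sorted_nth_mono[OF sorted_labels(4), of p q n f] assms sorted_labels(3) by simp
  then show ?thesis using label_key_le_iff[OF mem] by simp
qed

lemma sorted_labels_prefix_comb:
  assumes w: "distinct w" "set w = {1..n}" and m: "m \<in> des_mults n w"
  shows "sorted_labels n (prefix_comb n w m) = w"
proof -
  have len: "length w = n" using w by (rule length_if_distinct_set_eq)
  let ?k = "label_key n (prefix_comb n w m)"
  have "sorted (map ?k w)"
    unfolding sorted_iff_nth_Suc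
  proof (intro allI impI)
    fix p assume "Suc p < length (map ?k w)"
    then have p: "Suc p < n" using len by simp
    have mem: "w ! p \<in> {1..n}" "w ! Suc p \<in> {1..n}"
      using w len p nth_mem by (metis Suc_lessD)+
    have "w ! p \<le> w ! Suc p" if "m (Suc p) = 0"
    proof (rule nth_le_Suc_if_not_Des)
      show "Suc p \<notin> Des w" using that des_mults_pos[OF m len] by force
    qed (use p len in simp)
    then show "map ?k w ! p \<le> map ?k w ! Suc p"
      using p len prefix_comb_nth[OF w(1) len] tail_sum_Suc[of p n m]
      by (auto simp: label_key_le_iff[OF mem])
  qed
  then have "map ?k (sorted_labels n (prefix_comb n w m)) = map ?k w"
    using sorted_labels w inj_on_label_key
    by (intro sorted_distinct_set_unique) (auto simp: distinct_map)
  then show ?thesis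
    using inj_on_label_key sorted_labels w by (auto dest: map_inj_on)
qed

lemma prefix_jumps_prefix_comb:
  assumes w: "distinct w" "set w = {1..n}" and m: "m \<in> des_mults n w"
  shows "prefix_jumps n w (prefix_comb n w m) = m"
proof (rule extensionalityI)
  show "prefix_jumps n w (prefix_comb n w m) \<in> extensional {1..n}"
    unfolding prefix_jumps_def by simp
  show "m \<in> extensional {1..n}" using m by (simp add: des_mults_def PiE_iff)
next
  have len: "length w = n" using w by (rule length_if_distinct_set_eq)
  fix i assume i: "i \<in> {1..n}"
  have "prefix_comb n w m (w ! (i - 1)) = m i + tail_sum n m i"
    using i prefix_comb_nth[OF w(1) len, of "i - 1"] tail_sum_Suc[of "i - 1" n m] by auto
  moreover have "tail_sum n m i = (if i < n then prefix_comb n w m (w ! i) else 0)"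
    using i prefix_comb_nth[OF w(1) len, of i] by (auto simp: tail_sum_def)
  ultimately show "prefix_jumps n w (prefix_comb n w m) i = m i"
    using i by (simp add: prefix_jumps_def)
qed

lemma sorted_labels_lin_ext:
  assumes "f \<in> PPartitions P n"
  shows "sorted_labels n f \<in> lin_ext P n"
  unfolding lin_ext_def
proof (intro CollectI conjI sorted_labels allI impI)
  let ?w = "sorted_labels n f"
  fix a b assume ab: "a < n" "b < n" "(?w ! a, ?w ! b) \<in> P \<and> ?w ! a \<noteq> ?w ! b"
  show "a < b"
  proof (rule ccontr)
    have "f (?w ! b) \<le> f (?w ! a) \<and> (?w ! b < ?w ! a \<longrightarrow> f (?w ! b) < f (?w ! a))"
      using assms ab(3) unfolding PPartitions_def by blast
    moreover assume "\<not> a < b"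
    ultimately show False using sorted_labels_nth[of b a n f] ab by auto
  qed
qed

lemma prefix_jumps_des_mults:
  "prefix_jumps n (sorted_labels n f) f \<in> des_mults n (sorted_labels n f)"
  unfolding des_mults_def prefix_jumps_def restrict_PiE_iff
proof (intro ballI)
  let ?w = "sorted_labels n f"
  fix i assume "i \<in> {1..n}"
  show "f (?w ! (i - 1)) - (if i < n then f (?w ! i) else 0) \<in> (if i \<in> Des ?w then {1..} else UNIV)"
  proof (cases "i \<in> Des ?w")
    case True
    then have i: "1 \<le> i" "i < n" "?w ! i < ?w ! (i - 1)"
      using sorted_labels(3)[of n f] by (auto simp: Des_def)
    then have "f (?w ! i) < f (?w ! (i - 1))" using sorted_labels_nth[of "i - 1" i n f] by auto
    then show ?thesis using i True by simp
  qed simp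
qed

lemma tail_sum_prefix_jumps:
  assumes "p < n" and anti: "\<And>p q. p \<le> q \<Longrightarrow> q < n \<Longrightarrow> f (w ! q) \<le> f (w ! p)"
  shows "tail_sum n (prefix_jumps n w f) p = f (w ! p)"
proof -
  have "tail_sum n (prefix_jumps n w f) p = (if p < n then f (w ! p) else 0)" if "p \<le> n" for p
    using that
  proof (induction p rule: inc_induct)
    case (step k)
    then show ?case using tail_sum_Suc[of k n] anti[of k "Suc k"] by (simp add: prefix_jumps_def)
  qed (simp add: tail_sum_def)
  then show ?thesis using assms(1) by simp
qed

lemma prefix_comb_prefix_jumps:
  assumes w: "distinct w" "set w = {1..n}"
    and anti: "\<And>p q. p \<le> q \<Longrightarrow> q < n \<Longrightarrow> f (w ! q) \<le> f (w ! p)"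
    and zero: "\<And>a. a \<notin> {1..n} \<Longrightarrow> f a = 0"
  shows "prefix_comb n w (prefix_jumps n w f) = f"
proof
  have len: "length w = n" using w by (rule length_if_distinct_set_eq)
  fix a show "prefix_comb n w (prefix_jumps n w f) a = f a"
  proof (cases "a \<in> set w")
    case True
    then obtain p where "p < n" "a = w ! p" using len by (metis in_set_conv_nth)
    then show ?thesis using prefix_comb_nth[OF w(1) len] tail_sum_prefix_jumps[where f = f, OF _ anti] by simp
  qed (use prefix_comb_notin zero w in auto)
qed

lemma PPartitions_eq_UN_prefix_comb:
  assumes "partial_order_on {1..n} P"
  shows "PPartitions P n = (\<Union>w\<in>lin_ext P n. prefix_comb n w ` des_mults n w)"
proof
  show "(\<Union>w\<in>lin_ext P n. prefix_comb n w ` des_mults n w) \<subseteq> PPartitions P n"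
    using prefix_comb_PPartitions[OF assms] by blast
  show "PPartitions P n \<subseteq> (\<Union>w\<in>lin_ext P n. prefix_comb n w ` des_mults n w)"
  proof
    fix f assume f: "f \<in> PPartitions P n"
    let ?w = "sorted_labels n f"
    have anti: "f (?w ! q) \<le> f (?w ! p)" if "p \<le> q" "q < n" for p q
      using sorted_labels_nth[OF that, of f] by auto
    have zero: "f a = 0" if "a \<notin> {1..n}" for a
      using f that by (simp add: PPartitions_def)
    have "f = prefix_comb n ?w (prefix_jumps n ?w f)"
      by (rule prefix_comb_prefix_jumps[where f = f, OF sorted_labels(1,2) anti zero, symmetric])
    then show "f \<in> (\<Union>w\<in>lin_ext P n. prefix_comb n w ` des_mults n w)"
      using sorted_labels_lin_ext[OF f] prefix_jumps_des_mults by blast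
  qed
qed

lemma inj_on_prefix_comb:
  assumes "distinct w" "set w = {1..n}"
  shows "inj_on (prefix_comb n w) (des_mults n w)"
  by (rule inj_onI) (metis prefix_jumps_prefix_comb[OF assms])

lemma disjoint_prefix_comb_images:
  assumes "w \<in> lin_ext P n" "w' \<in> lin_ext P n" "w \<noteq> w'"
  shows "prefix_comb n w ` des_mults n w \<inter> prefix_comb n w' ` des_mults n w' = {}"
proof -
  have "w = w'" if "prefix_comb n w m = prefix_comb n w' m'" "m \<in> des_mults n w" "m' \<in> des_mults n w'"
    for m m'
    using that sorted_labels_prefix_comb lin_extD assms(1,2) by metis
  then show ?thesis using assms(3) by blast
qed

section \<open>The weight of a decomposed P-partition\<close>

lemma xpow_prefix_comb:
  fixes x :: "nat \<Rightarrow> 'a :: comm_ring_1"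
  assumes "set w \<subseteq> {1..n}"
  shows "xpow x n (prefix_comb n w m) = (\<Prod>i\<in>{1..n}. xset x (set (take i w)) ^ m i)"
proof -
  have "xpow x n (prefix_comb n w m)
      = (\<Prod>a\<in>{1..n}. \<Prod>i\<in>{1..n}. if a \<in> set (take i w) then x a ^ m i else 1)"
    unfolding xpow_def prefix_comb_def power_sum by (intro prod.cong refl) auto
  also have "\<dots> = (\<Prod>i\<in>{1..n}. \<Prod>a\<in>{1..n}. if a \<in> set (take i w) then x a ^ m i else 1)"
    by (rule prod.swap)
  also have "\<dots> = (\<Prod>i\<in>{1..n}. \<Prod>a\<in>set (take i w). x a ^ m i)"
  proof -
    have "{1..n} \<inter> set (take i w) = set (take i w)" for i
      using assms set_take_subset[of i w] by blast
    then show ?thesis by (simp add: prod.inter_restrict[symmetric])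
  qed
  finally show ?thesis
    unfolding xset_def by (simp add: prod_power_distrib)
qed

lemma level_set_prefix_comb:
  assumes w: "distinct w" "set w = {1..n}"
    and j: "j < n" "tail_sum n m (Suc j) < k" "k \<le> tail_sum n m j"
  shows "{a \<in> {1..n}. k \<le> prefix_comb n w m a} = set (take (Suc j) w)"
proof (intro set_eqI)
  have len: "length w = n" using w by (rule length_if_distinct_set_eq)
  fix a show "a \<in> {a \<in> {1..n}. k \<le> prefix_comb n w m a} \<longleftrightarrow> a \<in> set (take (Suc j) w)"
  proof (cases "a \<in> set w")
    case True
    then obtain p where p: "p < n" "a = w ! p" using len by (metis in_set_conv_nth)
    have "k \<le> tail_sum n m p \<longleftrightarrow> p \<le> j"
      using tail_sum_antimono[of p j n m] tail_sum_antimono[of "Suc j" p n m] j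
      by (cases "p \<le> j") auto
    then show ?thesis
      using p True w prefix_comb_nth[OF w(1) len p(1)] nth_in_set_take_iff[OF w(1), of p] len
      by auto
  next
    case False
    then show ?thesis using w(2) set_take_subset[of "Suc j" w] by auto
  qed
qed

lemma level_set_prefix_comb_empty:
  assumes w: "distinct w" "set w = {1..n}" and k: "tail_sum n m 0 < k"
  shows "{a \<in> {1..n}. k \<le> prefix_comb n w m a} = {}"
proof -
  have len: "length w = n" using w by (rule length_if_distinct_set_eq)
  have "prefix_comb n w m a < k" if "a \<in> set w" for a
  proof -
    obtain p where "p < n" "a = w ! p" using \<open>a \<in> set w\<close> len by (metis in_set_conv_nth)
    then show ?thesis using prefix_comb_nth[OF w(1) len] tail_sum_antimono[of 0 p n m] k by simp
  qed
  then show ?thesis using w(2) by force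
qed

lemma sum_level_sets_prefix_comb:
  fixes g :: "nat set \<Rightarrow> nat"
  assumes w: "distinct w" "set w = {1..n}" and "j \<le> n"
  shows "(\<Sum>k\<in>{tail_sum n m j<..tail_sum n m 0}. g {a \<in> {1..n}. k \<le> prefix_comb n w m a})
           = (\<Sum>i=1..j. m i * g (set (take i w)))"
  using assms(3)
proof (induction j)
  case (Suc j)
  let ?S = "tail_sum n m" and ?L = "\<lambda>k. {a \<in> {1..n}. k \<le> prefix_comb n w m a}"
  have "?S (Suc j) \<le> ?S j" "?S j \<le> ?S 0" by (auto intro: tail_sum_antimono)
  then have split: "{?S (Suc j)<..?S 0} = {?S (Suc j)<..?S j} \<union> {?S j<..?S 0}" by auto
  have "(\<Sum>k\<in>{?S (Suc j)<..?S j}. g (?L k)) = (\<Sum>k\<in>{?S (Suc j)<..?S j}. g (set (take (Suc j) w)))"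
    using Suc.prems by (intro sum.cong refl arg_cong[where f = g] level_set_prefix_comb[OF w]) auto
  also have "\<dots> = m (Suc j) * g (set (take (Suc j) w))"
    using tail_sum_Suc[of j n m] Suc.prems by simp
  finally show ?case
    unfolding split using Suc by (subst sum.union_disjoint) auto
qed simp

lemma nu_prefix_comb:
  assumes w: "distinct w" "set w = {1..n}"
  shows "nu P n (prefix_comb n w m) = (\<Sum>i\<in>{1..n}. m i * cP P (set (take i w)))"
proof -
  let ?f = "prefix_comb n w m" and ?S = "tail_sum n m"
  let ?L = "\<lambda>k. {a \<in> {1..n}. k \<le> ?f a}"
  have len: "length w = n" using w by (rule length_if_distinct_set_eq)
  have "?S 0 \<le> fsize n ?f"
  proof (cases "n = 0")
    case False
    then have "w ! 0 \<in> {1..n}" using w(2) len nth_mem by blast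
    then have "?f (w ! 0) \<le> fsize n ?f" unfolding fsize_def by (intro member_le_sum) auto
    then show ?thesis using prefix_comb_nth[OF w(1) len, of 0 m] False by simp
  qed (simp add: tail_sum_def)
  then have split: "{0<..fsize n ?f} = {0<..?S 0} \<union> {?S 0<..fsize n ?f}" by auto
  have "nu P n ?f = (\<Sum>k\<in>{0<..fsize n ?f}. cP P (?L k))"
    unfolding nu_def by (simp add: atLeastSucAtMost_greaterThanAtMost[symmetric])
  also have "\<dots> = (\<Sum>k\<in>{0<..?S 0}. cP P (?L k))"
  proof -
    have "cP P (?L k) = 0" if "?S 0 < k" for k
    proof -
      have empty: "?L k = {}" by (rule level_set_prefix_comb_empty[OF w that])
      show ?thesis unfolding empty cP_def by simp
    qed
    then show ?thesis unfolding split by (subst sum.union_disjoint) auto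
  qed
  also have "\<dots> = (\<Sum>i\<in>{1..n}. m i * cP P (set (take i w)))"
    using sum_level_sets_prefix_comb[OF w order_refl, where m = m and g = "cP P"] by (simp add: tail_sum_def)
  finally show ?thesis .
qed

lemma weight_prefix_comb:
  fixes t :: "'a :: comm_ring_1"
  assumes "distinct w" "set w = {1..n}"
  shows "t ^ nu P n (prefix_comb n w m) * xpow x n (prefix_comb n w m)
           = (\<Prod>i\<in>{1..n}. (t ^ cP P (set (take i w)) * xset x (set (take i w))) ^ m i)"
  unfolding nu_prefix_comb[OF assms] xpow_prefix_comb[OF equalityD1[OF assms(2)]] power_sum
  by (simp add: prod.distrib power_mult_distrib power_mult[symmetric] mult.commute)

section \<open>Generating functions\<close>

lemma has_sum_PPartitions_weight:
  fixes t :: complex and x :: "nat \<Rightarrow> complex"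
  assumes po: "partial_order_on {1..n} P"
    and less_1: "\<And>w i. w \<in> lin_ext P n \<Longrightarrow> i \<in> {1..n} \<Longrightarrow>
      norm (t ^ cP P (set (take i w)) * xset x (set (take i w))) < 1"
  shows "((\<lambda>f. t ^ nu P n f * xpow x n f) has_sum
          (\<Sum>w\<in>lin_ext P n. t ^ desP P w * (\<Prod>i\<in>Des w. xset x (set (take i w))) /
              (\<Prod>i\<in>{1..n}. 1 - t ^ cP P (set (take i w)) * xset x (set (take i w)))))
         (PPartitions P n)"
proof -
  define z where "z w i = t ^ cP P (set (take i w)) * xset x (set (take i w))" for w i
  define weight where "weight f = t ^ nu P n f * xpow x n f" for f
  have fiber: "(weight has_sum (t ^ desP P w * (\<Prod>i\<in>Des w. xset x (set (take i w))) /
      (\<Prod>i\<in>{1..n}. 1 - z w i))) (prefix_comb n w ` des_mults n w)"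
    if w: "w \<in> lin_ext P n" for w
  proof -
    note wf = lin_extD[OF w]
    have "Des w \<subseteq> {1..n}" using Des_subset[of w] wf(3) by auto
    then have "((\<lambda>m. \<Prod>i\<in>{1..n}. z w i ^ m i) has_sum
        ((\<Prod>i\<in>Des w. z w i) / (\<Prod>i\<in>{1..n}. 1 - z w i))) (des_mults n w)"
      unfolding des_mults_def using less_1[OF w] by (intro has_sum_prod_geometric_PiE) (auto simp: z_def)
    moreover have "(\<Prod>i\<in>Des w. z w i) = t ^ desP P w * (\<Prod>i\<in>Des w. xset x (set (take i w)))"
      unfolding z_def desP_def by (simp add: prod.distrib power_sum)
    ultimately have "((weight \<circ> prefix_comb n w) has_sum (t ^ desP P w *
        (\<Prod>i\<in>Des w. xset x (set (take i w))) / (\<Prod>i\<in>{1..n}. 1 - z w i))) (des_mults n w)"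
      by (simp add: o_def z_def weight_def weight_prefix_comb[OF wf(1,2)])
    then show ?thesis by (subst has_sum_reindex[OF inj_on_prefix_comb[OF wf(1,2)]])
  qed
  have "(weight has_sum (\<Sum>w\<in>lin_ext P n. t ^ desP P w *
      (\<Prod>i\<in>Des w. xset x (set (take i w))) / (\<Prod>i\<in>{1..n}. 1 - z w i)))
      (\<Union>w\<in>lin_ext P n. prefix_comb n w ` des_mults n w)"
    using finite_lin_ext fiber disjoint_prefix_comb_images by (rule sum_has_sum)
  then show ?thesis
    unfolding PPartitions_eq_UN_prefix_comb[OF po] weight_def z_def .
qed

lemma norm_prod_less_1:
  fixes x :: "'a \<Rightarrow> 'b :: {real_normed_div_algebra, comm_semiring_1}"
  assumes "finite A" "A \<noteq> {}" "\<And>a. a \<in> A \<Longrightarrow> norm (x a) < 1"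
  shows "norm (\<Prod>a\<in>A. x a) < 1"
proof -
  obtain a where a: "a \<in> A" using assms(2) by blast
  have "norm (\<Prod>a\<in>A. x a) = norm (x a) * (\<Prod>b\<in>A - {a}. norm (x b))"
    using assms(1) a by (simp add: prod.remove norm_mult prod_norm[symmetric])
  also have "\<dots> \<le> norm (x a)"
    using assms(3) by (intro mult_left_le prod_le_1) (auto simp: less_imp_le)
  also have "\<dots> < 1" using assms(3) a by simp
  finally show ?thesis .
qed

lemma set_take_lin_ext_nonempty:
  assumes "w \<in> lin_ext P n" "i \<in> {1..n}"
  shows "set (take i w) \<noteq> {}"
  using assms lin_extD(3)[OF assms(1)] by auto

lemma cP_pos:
  assumes "finite A" "A \<noteq> {}"
  shows "0 < cP P A"
  using assms unfolding cP_def by (auto simp: card_gt_0_iff quotient_def)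

lemma xset_const_take:
  assumes "distinct w" "i \<le> length w"
  shows "xset (\<lambda>_. q) (set (take i w)) = q ^ i"
  using assms by (simp add: xset_def distinct_card)

lemma has_sum_PPartitions_t_x:
  fixes t :: complex and x :: "nat \<Rightarrow> complex"
  assumes po: "partial_order_on {1..n} P" and x: "\<forall>i\<in>{1..n}. norm (x i) < 1" and t: "norm t \<le> 1"
  shows "((\<lambda>f. t ^ nu P n f * xpow x n f) has_sum
          (\<Sum>w\<in>lin_ext P n. t ^ desP P w * (\<Prod>i\<in>Des w. xset x (set (take i w))) /
              (\<Prod>i\<in>{1..n}. 1 - t ^ cP P (set (take i w)) * xset x (set (take i w)))))
         (PPartitions P n)"
proof (rule has_sum_PPartitions_weight[OF po])
  fix w i assume wi: "w \<in> lin_ext P n" "i \<in> {1..n}"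
  have "norm (xset x (set (take i w))) < 1"
    unfolding xset_def using set_take_lin_ext_nonempty[OF wi] lin_extD(2)[OF wi(1)] x
    by (intro norm_prod_less_1) (auto dest: in_set_takeD)
  moreover have "norm (t ^ cP P (set (take i w))) \<le> 1"
    using t by (simp add: norm_power power_le_one)
  ultimately show "norm (t ^ cP P (set (take i w)) * xset x (set (take i w))) < 1"
    unfolding norm_mult by (meson le_less_trans mult_left_le_one_le norm_ge_zero)
qed

lemma has_sum_PPartitions_x:
  fixes x :: "nat \<Rightarrow> complex"
  assumes po: "partial_order_on {1..n} P" and x: "\<forall>i\<in>{1..n}. norm (x i) < 1"
  shows "((\<lambda>f. xpow x n f) has_sum
          (\<Sum>w\<in>lin_ext P n. (\<Prod>i\<in>Des w. xset x (set (take i w))) /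
              (\<Prod>i\<in>{1..n}. 1 - xset x (set (take i w)))))
         (PPartitions P n)"
  using has_sum_PPartitions_t_x[OF po x, of 1] by simp

lemma has_sum_PPartitions_t_q:
  fixes t q :: complex
  assumes po: "partial_order_on {1..n} P" and q: "norm q < 1" and t: "norm t \<le> 1"
  shows "((\<lambda>f. t ^ nu P n f * q ^ fsize n f) has_sum
          (\<Sum>w\<in>lin_ext P n. t ^ desP P w * q ^ maj w /
              (\<Prod>i\<in>{1..n}. 1 - t ^ cP P (set (take i w)) * q ^ i)))
         (PPartitions P n)"
proof -
  have "xpow (\<lambda>_. q) n f = q ^ fsize n f" for f
    unfolding xpow_def fsize_def by (simp add: power_sum)
  moreover have "t ^ desP P w * (\<Prod>i\<in>Des w. xset (\<lambda>_. q) (set (take i w))) /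
        (\<Prod>i\<in>{1..n}. 1 - t ^ cP P (set (take i w)) * xset (\<lambda>_. q) (set (take i w)))
      = t ^ desP P w * q ^ maj w / (\<Prod>i\<in>{1..n}. 1 - t ^ cP P (set (take i w)) * q ^ i)"
    if w: "w \<in> lin_ext P n" for w
  proof -
    note wf = lin_extD[OF w]
    have "(\<Prod>i\<in>Des w. xset (\<lambda>_. q) (set (take i w))) = (\<Prod>i\<in>Des w. q ^ i)"
      using Des_subset[of w] wf by (intro prod.cong refl xset_const_take) auto
    then show ?thesis
      using wf by (simp add: xset_const_take maj_def power_sum)
  qed
  ultimately show ?thesis
    using has_sum_PPartitions_t_x[OF po _ t, of "\<lambda>_. q"] q by (simp cong: sum.cong)
qed

lemma has_sum_PPartitions_t:
  fixes t :: complex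
  assumes po: "partial_order_on {1..n} P" and t: "norm t < 1"
  shows "((\<lambda>f. t ^ nu P n f) has_sum
          (\<Sum>w\<in>lin_ext P n. t ^ desP P w / (\<Prod>i\<in>{1..n}. 1 - t ^ cP P (set (take i w)))))
         (PPartitions P n)"
proof -
  have "((\<lambda>f. t ^ nu P n f * xpow (\<lambda>_. 1) n f) has_sum
      (\<Sum>w\<in>lin_ext P n. t ^ desP P w * (\<Prod>i\<in>Des w. xset (\<lambda>_. 1) (set (take i w))) /
        (\<Prod>i\<in>{1..n}. 1 - t ^ cP P (set (take i w)) * xset (\<lambda>_. 1) (set (take i w)))))
      (PPartitions P n)"
  proof (rule has_sum_PPartitions_weight[OF po])
    fix w i assume wi: "w \<in> lin_ext P n" "i \<in> {1..n}"
    have "0 < cP P (set (take i w))"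
      using set_take_lin_ext_nonempty[OF wi] by (simp add: cP_pos)
    then show "norm (t ^ cP P (set (take i w)) * xset (\<lambda>_. 1) (set (take i w))) < 1"
      using t by (simp add: xset_def norm_power power_less_one_iff)
  qed
  then show ?thesis by (simp add: xset_def xpow_def)
qed

lemma q_series_PPartitions:
  fixes q :: complex
  assumes po: "partial_order_on {1..n} P" and q: "norm q < 1"
  shows "(\<Prod>i\<in>{1..n}. 1 - q ^ i) * (\<Sum>\<^sub>\<infinity>f\<in>PPartitions P n. q ^ fsize n f)
           = (\<Sum>w\<in>lin_ext P n. q ^ maj w)"
proof -
  have "(\<Sum>\<^sub>\<infinity>f\<in>PPartitions P n. q ^ fsize n f)
      = (\<Sum>w\<in>lin_ext P n. q ^ maj w / (\<Prod>i\<in>{1..n}. 1 - q ^ i))"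
    using has_sum_PPartitions_t_q[OF po q, of 1] by (simp add: infsumI)
  moreover have "(\<Prod>i\<in>{1..n}. 1 - q ^ i) \<noteq> 0"
  proof -
    have "norm (q ^ i) < 1" if "i \<in> {1..n}" for i
      using that q by (simp add: norm_power power_less_one_iff)
    then have "1 - q ^ i \<noteq> 0" if "i \<in> {1..n}" for i
      using that by (metis eq_iff_diff_eq_0 norm_one order_less_irrefl)
    then show ?thesis by (subst prod_zero_iff) auto
  qed
  ultimately show ?thesis by (simp add: sum_distrib_left)
qed

lemma q_series_PPartitions_tendsto:
  assumes po: "partial_order_on {1..n} P"
  shows "((\<lambda>q :: complex. (\<Prod>i\<in>{1..n}. 1 - q ^ i) * (\<Sum>\<^sub>\<infinity>f\<in>PPartitions P n. q ^ fsize n f))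
           \<longlongrightarrow> of_nat (card (lin_ext P n))) (at 1 within ball 0 1)"
proof -
  have "((\<lambda>q :: complex. \<Sum>w\<in>lin_ext P n. q ^ maj w) \<longlongrightarrow> (\<Sum>w\<in>lin_ext P n. 1 ^ maj w))
      (at 1 within ball 0 1)"
    by (intro tendsto_intros)
  moreover have "eventually (\<lambda>q :: complex. (\<Sum>w\<in>lin_ext P n. q ^ maj w) =
      (\<Prod>i\<in>{1..n}. 1 - q ^ i) * (\<Sum>\<^sub>\<infinity>f\<in>PPartitions P n. q ^ fsize n f)) (at 1 within ball 0 1)"
    using q_series_PPartitions[OF po] by (auto simp: eventually_at_filter)
  ultimately show ?thesis using tendsto_cong by force
qed

theorem corollary3p2:
  fixes P :: "(nat \<times> nat) set" and n :: nat
  assumes "partial_order_on {1..n} P"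
  shows
   "(\<forall>(x :: nat \<Rightarrow> complex) (t :: complex).
       (\<forall>i\<in>{1..n}. norm (x i) < 1) \<and> norm t \<le> 1 \<longrightarrow>
       ((\<lambda>f. t ^ nu P n f * xpow x n f) has_sum
          (\<Sum>w\<in>lin_ext P n. t ^ desP P w * (\<Prod>i\<in>Des w. xset x (set (take i w))) /
              (\<Prod>i\<in>{1..n}. 1 - t ^ cP P (set (take i w)) * xset x (set (take i w)))))
        (PPartitions P n))
  \<and> (\<forall>(x :: nat \<Rightarrow> complex).
       (\<forall>i\<in>{1..n}. norm (x i) < 1) \<longrightarrow>
       ((\<lambda>f. xpow x n f) has_sum
          (\<Sum>w\<in>lin_ext P n. (\<Prod>i\<in>Des w. xset x (set (take i w))) /
              (\<Prod>i\<in>{1..n}. 1 - xset x (set (take i w)))))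
        (PPartitions P n))
  \<and> (\<forall>(q :: complex) (t :: complex).
       norm q < 1 \<and> norm t \<le> 1 \<longrightarrow>
       ((\<lambda>f. t ^ nu P n f * q ^ fsize n f) has_sum
          (\<Sum>w\<in>lin_ext P n. t ^ desP P w * q ^ maj w /
              (\<Prod>i\<in>{1..n}. 1 - t ^ cP P (set (take i w)) * q ^ i)))
        (PPartitions P n))
  \<and> (\<forall>(t :: complex).
       norm t < 1 \<longrightarrow>
       ((\<lambda>f. t ^ nu P n f) has_sum
          (\<Sum>w\<in>lin_ext P n. t ^ desP P w /
              (\<Prod>i\<in>{1..n}. 1 - t ^ cP P (set (take i w)))))
        (PPartitions P n))
  \<and> (\<forall>(q :: complex). norm q < 1 \<longrightarrow>
       (\<Prod>i\<in>{1..n}. 1 - q ^ i) * (\<Sum>\<^sub>\<infinity>f\<in>PPartitions P n. q ^ fsize n f)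
         = (\<Sum>w\<in>lin_ext P n. q ^ maj w))
  \<and> ((\<lambda>q :: complex. (\<Prod>i\<in>{1..n}. 1 - q ^ i) * (\<Sum>\<^sub>\<infinity>f\<in>PPartitions P n. q ^ fsize n f))
       \<longlongrightarrow> of_nat (card (lin_ext P n))) (at 1 within ball 0 1)"
  using has_sum_PPartitions_t_x[OF assms] has_sum_PPartitions_x[OF assms]
    has_sum_PPartitions_t_q[OF assms] has_sum_PPartitions_t[OF assms]
    q_series_PPartitions[OF assms] q_series_PPartitions_tendsto[OF assms]
  by blast

end
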